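(* Let $p$ be a prime and let $G$ be a non-cyclic finite abelian $p$-group of exponent $\exp(G)=p^{\alpha}$, where $\alpha\ge 2$. Then $n_G\ge p^{\alpha+1}-p^{\alpha}+p^{\alpha-1}$. As a consequence, $n_G>\exp(G)$.
   Context: For a finite group $G$ and $x\in G$, let $I_{\mathcal C}(x)=\{y\in G : \langle x,y\rangle \text{ is cyclic}\}$. For a nontrivial finite group $G$, $n_G=\max\{|I_{\mathcal C}(x)| : x\in G\setminus\{1\}\}$. *)

theory Defs
  imports "HOL-Algebra.Algebra"
begin

definition I_C :: "('a, 'b) monoid_scheme \<Rightarrow> 'a \<Rightarrow> 'a set" where
  "I_C G x = {y \<in> carrier G. cyclic_group (subgroup_generated G {x, y})}"

definition n_G :: "('a, 'b) monoid_scheme \<Rightarrow> nat" where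
  "n_G G = Max ((\<lambda>x. card (I_C G x)) ` (carrier G - {\<one>\<^bsub>G\<^esub>}))"

definition group_exp :: "('a, 'b) monoid_scheme \<Rightarrow> nat" where
  "group_exp G = Lcm ((\<lambda>x. group.ord G x) ` carrier G)"

end

(* Take g of maximal order p^\<alpha> = exp G, and put q = p^(\<alpha>-1) and x = g^q, an element of order p.
   As G is not cyclic, some z outside <g> has z^p = 1. Since \<alpha> \<ge> 2, z lies in the subgroup
   K = {a. a^q = 1}, which therefore properly contains K \<inter> <g> (of order q); being a p-group,
   K has order at least p^\<alpha>. If a^q is a nontrivial power of x, then x \<in> <a^q> \<subseteq> <a>, so <x, a> = <a>
   is cyclic; the cosets g^i K with 0 < i < p supply (p - 1) |K| such elements. The q elements of
   K \<inter> <g> are disjoint from these and lie in the cyclic group <g> containing x. Hence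
   |I_C(x)| \<ge> (p - 1) p^\<alpha> + p^(\<alpha>-1). *)

theory Submission
  imports Defs
begin

lemma (in group) cyclic_subgroup_generated_pair:
  assumes z: "z \<in> carrier G" and x: "x \<in> generate G {z}" and y: "y \<in> generate G {z}"
  shows "cyclic_group (subgroup_generated G {x, y})"
proof -
  obtain a :: int where a: "x = z [^] a" using x generate_pow[OF z] by auto
  obtain b :: int where b: "y = z [^] b" using y generate_pow[OF z] by auto
  obtain u v where uv: "u * a + v * b = gcd a b" using bezout_int by blast
  define w where "w = z [^] gcd a b"
  have wc: "w \<in> carrier G" using z w_def by simp
  have xc: "x \<in> carrier G" "y \<in> carrier G" using a b z by auto
  have "x = w [^] (a div gcd a b)" "y = w [^] (b div gcd a b)"
    unfolding w_def a b using z by (simp_all add: int_pow_pow)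
  then have "generate G {x, y} \<subseteq> generate G {w}"
    using generate_pow[OF wc] by (intro generate_subgroup_incl generate_is_subgroup) (auto simp: wc)
  moreover have "generate G {w} \<subseteq> generate G {x, y}"
  proof (intro generate_subgroup_incl generate_is_subgroup)
    have sg: "subgroup (generate G {x, y}) G" using xc by (intro generate_is_subgroup) auto
    have "w = x [^] u \<otimes> y [^] v"
      unfolding w_def a b using z uv by (simp add: int_pow_mult int_pow_pow mult.commute flip: uv)
    moreover have "x \<in> generate G {x, y}" "y \<in> generate G {x, y}" by (auto intro: generate.incl)
    ultimately show "{w} \<subseteq> generate G {x, y}"
      by (simp add: subgroup_int_pow_closed[OF sg] subgroup.m_closed[OF sg])
  qed (use xc in auto)
  ultimately have "subgroup_generated G {x, y} = subgroup_generated G {w}"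
    unfolding subgroup_generated_def using xc wc by (simp add: Int_absorb1)
  then show ?thesis using cyclic_group_generated by simp
qed

lemma (in group) generate_subset_I_C:
  assumes "g \<in> carrier G" "x \<in> generate G {g}"
  shows "generate G {g} \<subseteq> I_C G x"
  using assms generate_incl[of "{g}"] cyclic_subgroup_generated_pair
  unfolding I_C_def by (auto intro: generate.incl)

lemma (in group) generate_eq_if_prime_ord:
  assumes fin: "finite (carrier G)" and x: "x \<in> carrier G" and p: "Factorial_Ring.prime (ord x)"
    and y: "y \<in> generate G {x}" "y \<noteq> \<one>"
  shows "generate G {y} = generate G {x}"
proof -
  obtain k :: nat where k: "y = x [^] k" using y generate_pow_on_finite_carrier[OF fin x] by auto
  have yc: "y \<in> carrier G" using k x by simp
  have "gcd (ord x) k dvd ord x" by simp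
  then have "gcd (ord x) k = 1 \<or> gcd (ord x) k = ord x" using p by (simp add: prime_nat_iff)
  moreover have "ord y \<noteq> 1" using ord_eq_1[OF yc] y(2) by simp
  ultimately have "ord y = ord x" using k x p ord_pow_gen[OF x, of k] by (auto split: if_splits)
  then have "card (generate G {y}) = card (generate G {x})" using generate_pow_card x yc by metis
  moreover have "generate G {y} \<subseteq> generate G {x}"
    using y x by (intro generate_subgroup_incl generate_is_subgroup) auto
  moreover have "finite (generate G {x})" using fin generate_incl[of "{x}"] x finite_subset by auto
  ultimately show ?thesis using card_subset_eq by blast
qed

lemma (in group) mem_I_C_if_pow_nontrivial:
  assumes fin: "finite (carrier G)" and x: "x \<in> carrier G" and p: "Factorial_Ring.prime (ord x)"
    and a: "a \<in> carrier G" and pow: "a [^] (n::nat) \<in> generate G {x}" "a [^] n \<noteq> \<one>"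
  shows "a \<in> I_C G x"
proof -
  have "x \<in> generate G {a [^] n}"
    using generate_eq_if_prime_ord[OF fin x p pow] generate.incl[of x "{x}"] by simp
  also have "generate G {a [^] n} \<subseteq> generate G {a}"
    using a generate_pow_on_finite_carrier[OF fin a]
    by (intro generate_subgroup_incl generate_is_subgroup) blast+
  finally show ?thesis using generate_subset_I_C[OF a] generate.incl[of a "{a}"] by blast
qed

lemma card_I_C_le_n_G:
  assumes "finite (carrier G)" "x \<in> carrier G" "x \<noteq> \<one>\<^bsub>G\<^esub>"
  shows "card (I_C G x) \<le> n_G G"
  unfolding n_G_def using assms by (intro Max_ge) auto

lemma (in group) card_subgroup_p_group:
  assumes "Factorial_Ring.prime p" "order G = p ^ k" "subgroup H G"
  shows "\<exists>e. card H = p ^ e"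
  using lagrange[OF assms(3)] divides_primepow_nat[OF assms(1)] assms(2) by (metis dvd_triv_right)

lemma (in group) ord_p_group:
  assumes "Factorial_Ring.prime p" "order G = p ^ k" "a \<in> carrier G"
  shows "\<exists>e. ord a = p ^ e"
  using card_subgroup_p_group[OF assms(1,2) generate_is_subgroup] generate_pow_card assms(3) by auto

lemma (in group) pow_group_exp_eq_one:
  assumes "a \<in> carrier G" shows "a [^] group_exp G = \<one>"
  unfolding group_exp_def using assms pow_eq_id by (auto intro: dvd_Lcm)

lemma (in group) p_group_exists_ord_eq_group_exp:
  assumes fin: "finite (carrier G)" and p: "Factorial_Ring.prime p" and order: "order G = p ^ k"
  shows "\<exists>g\<in>carrier G. ord g = group_exp G"
proof -
  define M where "M = Max (ord ` carrier G)"
  have "M \<in> ord ` carrier G" unfolding M_def using fin by (intro Max_in) auto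
  then obtain g where g: "g \<in> carrier G" "ord g = M" by auto
  obtain f where f: "M = p ^ f" using ord_p_group[OF p order g(1)] g(2) by auto
  have "ord a dvd M" if a: "a \<in> carrier G" for a
  proof -
    obtain e where e: "ord a = p ^ e" using ord_p_group[OF p order a] by blast
    have "ord a \<le> M" unfolding M_def using fin a by (intro Max_ge) auto
    then have "p ^ e \<le> p ^ f" using e f by simp
    then have "e \<le> f" using prime_gt_1_nat[OF p] power_le_imp_le_exp by blast
    then show ?thesis unfolding e f by (rule le_imp_power_dvd)
  qed
  then have "group_exp G = M"
    unfolding group_exp_def
  proof (intro dvd_antisym Lcm_least)
    show "M dvd Lcm (ord ` carrier G)" unfolding g(2)[symmetric] using g(1) by (intro dvd_Lcm) simp
  qed auto
  then show ?thesis using g by auto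
qed

lemma (in group) exists_not_in_subgroup_pow_in:
  fixes p n :: nat
  assumes H: "subgroup H G" and y: "y \<in> carrier G" "y \<notin> H" "y [^] (p ^ n) \<in> H"
  shows "\<exists>w\<in>carrier G. w \<notin> H \<and> w [^] p \<in> H"
  using y
proof (induction n arbitrary: y)
  case 0
  then show ?case using nat_pow_Suc[of y 0] by simp
next
  case (Suc n)
  show ?case
  proof (cases "y [^] p \<in> H")
    case False
    have "(y [^] p) [^] (p ^ n) \<in> H" using Suc.prems by (simp add: nat_pow_pow)
    then show ?thesis using Suc.IH[of "y [^] p"] Suc.prems False by simp
  qed (use Suc.prems in blast)
qed

lemma (in group) exists_not_in_generate_if_not_cyclic:
  assumes "\<not> cyclic_group G" "g \<in> carrier G"
  shows "\<exists>y\<in>carrier G. y \<notin> generate G {g}"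
proof (rule ccontr)
  assume "\<not> ?thesis"
  then have "generate G {g} = carrier G" using generate_incl[of "{g}"] assms(2) by blast
  then have "subgroup_generated G {g} = G" unfolding subgroup_generated_def using assms(2) by simp
  then show False using assms unfolding cyclic_group_def by blast
qed

lemma (in comm_group) exists_pow_eq_one_not_in_generate:
  assumes fin: "finite (carrier G)" and "\<not> cyclic_group G" and "0 < p"
    and g: "g \<in> carrier G" "ord g = p ^ \<alpha>" and exp: "\<And>a. a \<in> carrier G \<Longrightarrow> a [^] (p ^ \<alpha>) = \<one>"
  shows "\<exists>z\<in>carrier G. z \<notin> generate G {g} \<and> z [^] p = \<one>"
proof -
  let ?C = "generate G {g}"
  have C: "subgroup ?C G" using g by (intro generate_is_subgroup) auto
  obtain y where y: "y \<in> carrier G" "y \<notin> ?C"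
    using exists_not_in_generate_if_not_cyclic assms(2) g(1) by blast
  have "\<alpha> \<noteq> 0"
  proof
    assume "\<alpha> = 0"
    then have "y = \<one>" using exp[OF y(1)] nat_pow_Suc[of y 0] y(1) by simp
    then show False using y(2) subgroup.one_closed[OF C] by simp
  qed
  then have p_\<alpha>: "p ^ \<alpha> = p * p ^ (\<alpha> - 1)" by (simp flip: power_Suc)
  obtain w where w: "w \<in> carrier G" "w \<notin> ?C" "w [^] p \<in> ?C"
    using exists_not_in_subgroup_pow_in[OF C y, where p = p and n = \<alpha>] exp[OF y(1)]
      subgroup.one_closed[OF C]
    by auto
  obtain k :: nat where k: "w [^] p = g [^] k" using w(3) generate_pow_on_finite_carrier[OF fin g(1)] by auto
  \<comment> \<open>as g has the largest possible order, \<open>w [^] p = g [^] k\<close> forces \<open>p dvd k\<close>\<close>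
  have "g [^] (k * p ^ (\<alpha> - 1)) = (w [^] p) [^] p ^ (\<alpha> - 1)"
    using g by (simp add: k nat_pow_pow)
  also have "\<dots> = \<one>" using w exp[OF w(1)] by (simp add: nat_pow_pow p_\<alpha>)
  finally have "p * p ^ (\<alpha> - 1) dvd k * p ^ (\<alpha> - 1)" using pow_eq_id[OF g(1)] g(2) p_\<alpha> by simp
  then obtain m where m: "k = p * m" using \<open>0 < p\<close> by (auto elim: dvdE)
  define z where "z = w \<otimes> inv (g [^] m)"
  have z: "z \<in> carrier G" unfolding z_def using w g by simp
  have "z [^] p = w [^] p \<otimes> inv ((g [^] m) [^] p)"
    unfolding z_def using w g by (simp add: pow_mult_distrib m_comm nat_pow_inv)
  also have "\<dots> = \<one>" using g by (simp add: k m nat_pow_pow mult.commute)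
  finally have "z [^] p = \<one>" .
  moreover have "z \<notin> ?C"
  proof
    assume "z \<in> ?C"
    moreover have "g [^] m \<in> ?C" using generate_pow_on_finite_carrier[OF fin g(1)] by auto
    ultimately have "z \<otimes> g [^] m \<in> ?C" using subgroup.m_closed[OF C] by blast
    then show False unfolding z_def using w g by (simp add: m_assoc)
  qed
  ultimately show ?thesis using z by blast
qed

lemma (in comm_group) subgroup_pow_eq_one:
  "subgroup {a \<in> carrier G. a [^] (n::nat) = \<one>} G" (is "subgroup ?K G")
proof (rule subgroupI)
  show "inv a \<in> ?K" if "a \<in> ?K" for a using that by (auto simp: nat_pow_inv)
  show "a \<otimes> b \<in> ?K" if "a \<in> ?K" "b \<in> ?K" for a b using that by (auto simp: pow_mult_distrib m_comm)
qed auto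

lemma (in comm_group) card_pow_eq_one_inter_generate_ge:
  assumes fin: "finite (carrier G)" and g: "g \<in> carrier G" "ord g = p * q"
  shows "q \<le> card ({a \<in> carrier G. a [^] q = \<one>} \<inter> generate G {g})"
proof -
  let ?K = "{a \<in> carrier G. a [^] q = \<one>}" and ?C = "generate G {g}"
  have "p \<noteq> 0" using ord_ge_1[OF fin g(1)] g(2) by auto
  then have "q = ord (g [^] p)" using ord_pow[OF g(1), of p] g(2) by simp
  also have "\<dots> = card (generate G {g [^] p})" using g(1) by (simp add: generate_pow_card)
  also have "\<dots> \<le> card (?K \<inter> ?C)"
  proof (rule card_mono)
    show "finite (?K \<inter> ?C)" using fin by simp
    have "g [^] p \<in> ?K" using g pow_ord_eq_1[OF g(1)] by (simp add: nat_pow_pow)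
    moreover have "g [^] p \<in> ?C" using generate_pow_on_finite_carrier[OF fin g(1)] by auto
    moreover have "subgroup ?C G" using g(1) by (intro generate_is_subgroup) simp
    ultimately have "generate G {g [^] p} \<subseteq> ?K" "generate G {g [^] p} \<subseteq> ?C"
      using subgroup_pow_eq_one by (simp_all add: generate_subgroup_incl)
    then show "generate G {g [^] p} \<subseteq> ?K \<inter> ?C" by blast
  qed
  finally show ?thesis .
qed

lemma (in comm_group) card_pow_eq_one_ge:
  assumes fin: "finite (carrier G)" and p: "Factorial_Ring.prime p" and order: "order G = p ^ k"
    and g: "g \<in> carrier G" "ord g = p * p ^ m"
    and z: "z \<in> carrier G" "z \<notin> generate G {g}" "z [^] (p ^ m) = \<one>"
  shows "p * p ^ m \<le> card {a \<in> carrier G. a [^] (p ^ m) = \<one>}"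
proof -
  let ?K = "{a \<in> carrier G. a [^] (p ^ m) = \<one>}"
  have "p ^ m \<le> card (?K \<inter> generate G {g})"
    using card_pow_eq_one_inter_generate_ge[OF fin g] .
  also have "\<dots> < card ?K"
  proof (rule psubset_card_mono)
    show "finite ?K" using fin by simp
    show "?K \<inter> generate G {g} \<subset> ?K" using z by blast
  qed
  finally have less: "p ^ m < card ?K" .
  obtain e where e: "card ?K = p ^ e" using card_subgroup_p_group[OF p order subgroup_pow_eq_one] by blast
  have "1 < p" using prime_gt_1_nat[OF p] .
  then have "m < e" using power_less_imp_less_exp[of p m e] less e by simp
  then show ?thesis using e \<open>1 < p\<close> power_increasing[of "Suc m" e p] by simp
qed

lemma (in comm_group) card_pow_in_generate_ge:
  assumes fin: "finite (carrier G)" and g: "g \<in> carrier G" "ord g = p * q"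
  shows "(p - 1) * card {a \<in> carrier G. a [^] q = \<one>}
    \<le> card {a \<in> carrier G. a [^] q \<in> generate G {g [^] q} - {\<one>}}"
proof -
  let ?K = "{a \<in> carrier G. a [^] q = \<one>}"
  define x where "x = g [^] q"
  have x: "x \<in> carrier G" unfolding x_def using g by simp
  have "q \<noteq> 0" using ord_ge_1[OF fin g(1)] g(2) by auto
  then have ord_x: "ord x = p" unfolding x_def using ord_pow[OF g(1), of q] g(2) by simp
  have pow_q: "(g [^] i \<otimes> a) [^] q = x [^] i" if "a \<in> ?K" for i :: nat and a
    using that g unfolding x_def by (simp add: pow_mult_distrib m_comm nat_pow_pow mult.commute)
  define f where "f = (\<lambda>(i :: nat, a). g [^] i \<otimes> a)"
  have "inj_on f ({1..<p} \<times> ?K)"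
  proof (rule inj_onI)
    fix u v assume "u \<in> {1..<p} \<times> ?K" "v \<in> {1..<p} \<times> ?K" and eq: "f u = f v"
    then obtain i a j b where uv: "u = (i, a)" "v = (j, b)"
      and ia: "i \<in> {1..<p}" "a \<in> ?K" and jb: "j \<in> {1..<p}" "b \<in> ?K" by blast
    have "x [^] i = x [^] j" using pow_q[OF ia(2), of i] pow_q[OF jb(2), of j] eq uv unfolding f_def by simp
    then have "i = j" using ord_inj[OF x] ia(1) jb(1) ord_x unfolding inj_on_def by auto
    then show "u = v" using eq ia jb g uv unfolding f_def by simp
  qed
  then have "(p - 1) * card ?K = card (f ` ({1..<p} \<times> ?K))"
    by (simp add: card_image card_cartesian_product)
  also have "\<dots> \<le> card {a \<in> carrier G. a [^] q \<in> generate G {x} - {\<one>}}"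
  proof (rule card_mono)
    show "finite {a \<in> carrier G. a [^] q \<in> generate G {x} - {\<one>}}" using fin by simp
    show "f ` ({1..<p} \<times> ?K) \<subseteq> {a \<in> carrier G. a [^] q \<in> generate G {x} - {\<one>}}"
    proof (rule image_subsetI)
      fix u assume "u \<in> {1..<p} \<times> ?K"
      then obtain i a where u: "u = (i, a)" and i: "i \<in> {1..<p}" and a: "a \<in> ?K" by blast
      have "x [^] i \<in> generate G {x}" using generate_pow_on_finite_carrier[OF fin x] by auto
      moreover have "x [^] i \<noteq> \<one>" using i pow_eq_id[OF x] ord_x by (auto dest: dvd_imp_le)
      ultimately show "f u \<in> {a \<in> carrier G. a [^] q \<in> generate G {x} - {\<one>}}"
        using pow_q[OF a] a g u unfolding f_def by simp
    qed
  qed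
  finally show ?thesis unfolding x_def .
qed

lemma (in comm_group) card_I_C_pow_ge:
  assumes fin: "finite (carrier G)" and p: "Factorial_Ring.prime p" and g: "g \<in> carrier G" "ord g = p * q"
  shows "(p - 1) * card {a \<in> carrier G. a [^] q = \<one>} + q \<le> card (I_C G (g [^] q))"
proof -
  define x where "x = g [^] q"
  define A where "A = {a \<in> carrier G. a [^] q \<in> generate G {x} - {\<one>}}"
  define B where "B = {a \<in> carrier G. a [^] q = \<one>} \<inter> generate G {g}"
  have x: "x \<in> carrier G" unfolding x_def using g by simp
  have "q \<noteq> 0" using ord_ge_1[OF fin g(1)] g(2) by auto
  then have "ord x = p" unfolding x_def using ord_pow[OF g(1), of q] g(2) by simp
  then have "A \<subseteq> I_C G x" unfolding A_def using mem_I_C_if_pow_nontrivial[OF fin x] p by auto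
  moreover have "B \<subseteq> I_C G x"
    using generate_subset_I_C[OF g(1)] generate_pow_on_finite_carrier[OF fin g(1)]
    unfolding B_def x_def by blast
  moreover have "A \<inter> B = {}" unfolding A_def B_def by auto
  moreover have "finite (I_C G x)" unfolding I_C_def using fin by simp
  ultimately have "card A + card B \<le> card (I_C G x)"
    by (metis card_Un_disjoint card_mono finite_subset Un_least)
  then show ?thesis
    using card_pow_in_generate_ge[OF fin g] card_pow_eq_one_inter_generate_ge[OF fin g]
    unfolding A_def B_def x_def by linarith
qed

lemma (in comm_group) n_G_ge_p_group:
  assumes fin: "finite (carrier G)" and p: "Factorial_Ring.prime p" and order: "order G = p ^ k"
    and "\<not> cyclic_group G" and g: "g \<in> carrier G" "ord g = p ^ \<alpha>"
    and exp: "\<And>a. a \<in> carrier G \<Longrightarrow> a [^] (p ^ \<alpha>) = \<one>" and "2 \<le> \<alpha>"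
  shows "(p - 1) * p ^ \<alpha> + p ^ (\<alpha> - 1) \<le> n_G G"
proof -
  define m where "m = \<alpha> - 1"
  have "\<alpha> = Suc m" "m = Suc (m - 1)" using \<open>2 \<le> \<alpha>\<close> unfolding m_def by arith+
  then have \<alpha>: "p ^ \<alpha> = p * p ^ m" "p ^ m = p * p ^ (m - 1)" by (metis power_Suc)+
  have ord_g: "ord g = p * p ^ m" using g(2) \<alpha>(1) by simp
  obtain z where z: "z \<in> carrier G" "z \<notin> generate G {g}" "z [^] p = \<one>"
    using exists_pow_eq_one_not_in_generate[OF fin \<open>\<not> cyclic_group G\<close> prime_gt_0_nat[OF p] g exp]
    by blast
  have "z [^] p ^ m = (z [^] p) [^] p ^ (m - 1)" using z(1) \<alpha>(2) by (simp add: nat_pow_pow)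
  then have card_K: "p ^ \<alpha> \<le> card {a \<in> carrier G. a [^] p ^ m = \<one>}"
    using card_pow_eq_one_ge[OF fin p order g(1) ord_g z(1,2)] z(3) \<alpha>(1) by simp
  have "g [^] p ^ m \<noteq> \<one>"
    using pow_eq_id[OF g(1)] ord_g prime_gt_1_nat[OF p] by (simp add: nat_dvd_not_less)
  then have "(p - 1) * card {a \<in> carrier G. a [^] p ^ m = \<one>} + p ^ m \<le> n_G G"
    using card_I_C_pow_ge[OF fin p g(1) ord_g] card_I_C_le_n_G[OF fin] g(1)
    by (meson le_trans nat_pow_closed)
  then show ?thesis using mult_le_mono2[OF card_K, of "p - 1"] unfolding m_def by linarith
qed

theorem lemma2p4:
  fixes G (structure) and p \<alpha> :: nat
  assumes "comm_group G" and "finite (carrier G)"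
    and "Factorial_Ring.prime p" and "\<exists>k. order G = p ^ k"
    and "\<not> cyclic_group G"
    and "group_exp G = p ^ \<alpha>" and "\<alpha> \<ge> 2"
  shows "n_G G \<ge> p ^ (\<alpha> + 1) - p ^ \<alpha> + p ^ (\<alpha> - 1) \<and> n_G G > group_exp G"
proof -
  interpret comm_group G by fact
  note fin = assms(2) and p = assms(3)
  obtain k where order: "order G = p ^ k" using assms(4) by blast
  obtain g where g: "g \<in> carrier G" "ord g = p ^ \<alpha>"
    using p_group_exists_ord_eq_group_exp[OF fin p order] assms(6) by auto
  have bound: "(p - 1) * p ^ \<alpha> + p ^ (\<alpha> - 1) \<le> n_G G"
    using n_G_ge_p_group[OF fin p order assms(5) g _ assms(7)] pow_group_exp_eq_one assms(6) by simp
  have "p ^ (\<alpha> + 1) - p ^ \<alpha> = (p - 1) * p ^ \<alpha>" by (simp add: diff_mult_distrib)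
  moreover have "p ^ \<alpha> \<le> (p - 1) * p ^ \<alpha>" using prime_gt_1_nat[OF p] by simp
  moreover have "0 < p ^ (\<alpha> - 1)" using prime_gt_0_nat[OF p] by simp
  ultimately show ?thesis using bound unfolding assms(6) by (intro conjI) linarith+
qed

end
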